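(* Let $q$ be a prime power and $s$ an odd integer, and let $G$ be an abelian group with $|G|=(q^s+1)(q^{2s}+1)$ which contains a difference set with parameters \[ (v,k,\lambda)=\left(\frac{q^{4s}-1}{q^s-1},\frac{q^{3s}-1}{q^s-1},\frac{q^{2s}-1}{q^s-1}\right). \] Let $\tau$ be the automorphism $\tau:x\mapsto x^{q^4}$ of $G$, and let $G^\tau$ denote the subgroup of fixed points of $\tau$. Let $M$ be any subgroup of $G$ of order $(q+1)(q^2+1)$. Then $M\le G^\tau$. Furthermore, let $b=\gcd(q+1,s)$ and $c=\gcd(q^2+1,s)$; if the Sylow $r$-subgroup of $G$ is cyclic for every prime $r$ dividing $b$ or $c$, then $M=G^\tau$.
   Context: A $(v,k,\lambda)$-difference set in an abelian group $G$ of order $v$ is a $k$-subset $D$ such that every non-identity element of $G$ is of the form $d_1d_2^{-1}$ with $d_1,d_2\in D$ in exactly $\lambda$ ways. *)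

theory Defs
  imports "HOL-Algebra.Algebra" "HOL-Computational_Algebra.Primes"
begin

definition difference_set :: "('a, 'b) monoid_scheme \<Rightarrow> 'a set \<Rightarrow> nat \<Rightarrow> nat \<Rightarrow> nat \<Rightarrow> bool" where
  "difference_set G D v k lam \<longleftrightarrow>
     card (carrier G) = v \<and> D \<subseteq> carrier G \<and> card D = k \<and>
     (\<forall>g \<in> carrier G - {\<one>\<^bsub>G\<^esub>}.
        card {(d1, d2). d1 \<in> D \<and> d2 \<in> D \<and> d1 \<otimes>\<^bsub>G\<^esub> inv\<^bsub>G\<^esub> d2 = g} = lam)"

definition prime_power :: "nat \<Rightarrow> bool" where
  "prime_power q \<longleftrightarrow> (\<exists>p n. Factorial_Ring.prime (p::nat) \<and> n \<ge> 1 \<and> q = p ^ n)"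

definition pow_fixed :: "('a, 'b) monoid_scheme \<Rightarrow> nat \<Rightarrow> 'a set" where
  "pow_fixed G q = {x \<in> carrier G. x [^]\<^bsub>G\<^esub> (q ^ 4) = x}"

definition sylow_subgroup :: "('a, 'b) monoid_scheme \<Rightarrow> nat \<Rightarrow> 'a set \<Rightarrow> bool" where
  "sylow_subgroup G r P \<longleftrightarrow> subgroup P G \<and> card P = r ^ multiplicity r (order G)"

end

theory Submission
  imports Defs "HOL-Number_Theory.Cong"
begin

text \<open>
  Put \<open>m = (q + 1) * (q ^ 2 + 1) = card M\<close> and \<open>t = order G div m\<close>. Since
  \<open>q ^ 4 - 1 = (q - 1) * m\<close>, an element is fixed by \<open>\<tau>\<close> iff its order divides
  \<open>(q - 1) * m\<close>, which already gives \<open>M \<subseteq> G\<^sup>\<tau>\<close>. For odd \<open>s\<close> we have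
  \<open>x ^ s + 1 = (x + 1) * A x\<close> with \<open>A x = (\<Sum>i<s. (- x) ^ i)\<close>, so \<open>t = A q * A (q ^ 2)\<close>.
  As \<open>A x \<equiv> 1\<close> modulo primes dividing \<open>x - 1\<close> and \<open>A x \<equiv> s\<close> modulo primes dividing
  \<open>x + 1\<close>, \<open>t\<close> is prime to \<open>q - 1\<close> and every prime dividing both \<open>m\<close> and \<open>t\<close>
  divides \<open>b\<close> or \<open>c\<close>. Hence \<open>G\<^sup>\<tau>\<close> consists of the elements whose order divides
  \<open>card M\<close>, and these lie in \<open>M\<close>, one prime \<open>p\<close> at a time: if \<open>p\<close> does not divide
  \<open>t\<close>, through the index; otherwise a Sylow \<open>p\<close>-subgroup of \<open>M\<close>, of order \<open>p ^ a\<close>,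
  exhausts the at most \<open>p ^ a\<close> solutions of \<open>z ^ p ^ a = 1\<close> in the cyclic Sylow
  \<open>p\<close>-subgroup of \<open>G\<close>.
\<close>

hide_const (open) Divisibility.prime

definition alt_geom_sum :: "nat \<Rightarrow> int \<Rightarrow> int" where
  "alt_geom_sum s x = (\<Sum>i<s. (- x) ^ i)"

lemma plus_one_mult_alt_geom_sum:
  assumes "odd s"
  shows "(x + 1) * alt_geom_sum s x = x ^ s + 1"
proof -
  have "(1 - (- x)) * alt_geom_sum s x = 1 - (- x) ^ s"
    unfolding alt_geom_sum_def by (rule one_diff_power_eq[symmetric])
  thus ?thesis using assms by (simp add: power_minus_odd add.commute)
qed

lemma alt_geom_sum_cong:
  "[x = y] (mod m) \<Longrightarrow> [alt_geom_sum s x = alt_geom_sum s y] (mod m)"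
  unfolding alt_geom_sum_def by (intro cong_sum cong_pow) (simp add: cong_minus_minus_iff)

lemma alt_geom_sum_one: "odd s \<Longrightarrow> alt_geom_sum s 1 = 1"
  using plus_one_mult_alt_geom_sum[of s 1] by simp

lemma alt_geom_sum_minus_one: "alt_geom_sum s (- 1) = int s"
  by (simp add: alt_geom_sum_def)

lemma alt_geom_sum_pos:
  assumes "odd s" "0 \<le> x"
  shows "0 < alt_geom_sum s x"
proof -
  have "0 < (x + 1) * alt_geom_sum s x"
    using assms by (simp add: plus_one_mult_alt_geom_sum add_nonneg_pos)
  thus ?thesis using assms(2) by (simp add: zero_less_mult_iff)
qed

lemma not_dvd_alt_geom_sum_if_cong_one:
  assumes "odd s" "prime p" "[x = 1] (mod p)"
  shows "\<not> p dvd alt_geom_sum s x"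
proof
  assume "p dvd alt_geom_sum s x"
  moreover have "[alt_geom_sum s x = 1] (mod p)"
    using alt_geom_sum_cong[OF assms(3), of s] alt_geom_sum_one[OF assms(1)] by simp
  ultimately have "p dvd 1" using cong_dvd_iff by blast
  thus False using assms(2) by (simp add: not_prime_unit)
qed

lemma dvd_alt_geom_sum_iff_if_cong_minus_one:
  "[x = - 1] (mod p) \<Longrightarrow> p dvd alt_geom_sum s x \<longleftrightarrow> p dvd int s"
  using alt_geom_sum_cong[of x "- 1" p s] by (simp add: alt_geom_sum_minus_one cong_dvd_iff)

text \<open>Here \<open>x ^ s \<equiv> \<plusminus>x\<close> and \<open>x ^ s \<equiv> -1\<close>, so \<open>x \<equiv> \<plusminus>1\<close>; and \<open>x \<equiv> 1\<close> would make the sum \<open>\<equiv> 1\<close>.\<close>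
lemma cong_minus_one_if_dvd_alt_geom_sum:
  assumes s: "odd s" and p: "prime p" and x2: "[x ^ 2 = - 1] (mod p)"
    and dvd: "p dvd alt_geom_sum s x"
  shows "[x = - 1] (mod p)"
proof -
  have "p dvd x ^ s + 1"
    using dvd plus_one_mult_alt_geom_sum[OF s, of x] by (metis dvd_mult)
  hence xs: "[x ^ s = - 1] (mod p)" by (simp add: cong_iff_dvd_diff)
  obtain k where k: "s = Suc (2 * k)" using s oddE by fastforce
  have "[x ^ s = x * (- 1) ^ k] (mod p)"
    unfolding k power_Suc power_mult by (intro cong_mult cong_pow x2 cong_refl)
  hence sign: "[x * (- 1) ^ k = - 1] (mod p)" using xs by (metis cong_sym cong_trans)
  show ?thesis
  proof (cases "even k")
    case True
    thus ?thesis using sign by simp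
  next
    case False
    hence "[x = 1] (mod p)" using sign by (simp add: cong_minus_minus_iff flip: minus_equation_iff)
    thus ?thesis using not_dvd_alt_geom_sum_if_cong_one[OF s p] dvd by blast
  qed
qed

lemma dvd_if_dvd_mult_coprime:
  fixes k m a b :: nat
  assumes "k dvd m * a" "k dvd m * b" "coprime a b"
  shows "k dvd m"
proof -
  have "k dvd gcd (m * a) (m * b)" using assms(1,2) by (rule gcd_greatest)
  also have "\<dots> = m * gcd a b" by (rule gcd_mult_distrib_nat[symmetric])
  finally show ?thesis using assms(3) by (simp add: coprime_iff_gcd_eq_1)
qed

lemma int_cong_minus_one_iff: "[int x = - 1] (mod int m) \<longleftrightarrow> m dvd x + 1"
  unfolding cong_iff_dvd_diff by (metis diff_minus_eq_add of_nat_1 of_nat_add of_nat_dvd_iff)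

text \<open>The index of \<open>M\<close> in \<open>G\<close>: \<open>((q ^ s + 1) div (q + 1)) * ((q ^ (2 * s) + 1) div (q ^ 2 + 1))\<close>.\<close>
definition cofactor :: "nat \<Rightarrow> nat \<Rightarrow> nat" where
  "cofactor q s = nat (alt_geom_sum s (int q) * alt_geom_sum s (int q ^ 2))"

lemma int_cofactor:
  "odd s \<Longrightarrow> int (cofactor q s) = alt_geom_sum s (int q) * alt_geom_sum s (int q ^ 2)"
  unfolding cofactor_def
  using alt_geom_sum_pos[of s "int q"] alt_geom_sum_pos[of s "int q ^ 2"] by simp

lemma mult_cofactor:
  assumes "odd s"
  shows "(q ^ s + 1) * (q ^ (2 * s) + 1) = (q + 1) * (q ^ 2 + 1) * cofactor q s"
proof -
  let ?x = "int q"
  have "int ((q ^ s + 1) * (q ^ (2 * s) + 1)) = (?x ^ s + 1) * ((?x ^ 2) ^ s + 1)"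
    by (simp flip: power_mult add: mult.commute algebra_simps)
  also have "\<dots> = ((?x + 1) * alt_geom_sum s ?x) * ((?x ^ 2 + 1) * alt_geom_sum s (?x ^ 2))"
    by (simp only: plus_one_mult_alt_geom_sum[OF assms])
  also have "\<dots> = int ((q + 1) * (q ^ 2 + 1) * cofactor q s)"
    by (simp add: int_cofactor[OF assms] algebra_simps)
  finally show ?thesis by (simp only: of_nat_eq_iff)
qed

lemma prime_dvd_cofactor_iff:
  "odd s \<Longrightarrow> prime p \<Longrightarrow>
    p dvd cofactor q s \<longleftrightarrow> int p dvd alt_geom_sum s (int q) \<or> int p dvd alt_geom_sum s (int q ^ 2)"
  by (simp flip: int_cofactor prime_dvd_mult_iff)

lemma coprime_cofactor:
  assumes s: "odd s" and q: "1 \<le> q"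
  shows "coprime (q - 1) (cofactor q s)"
proof (rule ccontr)
  assume "\<not> coprime (q - 1) (cofactor q s)"
  hence "gcd (q - 1) (cofactor q s) \<noteq> 1" by (simp add: coprime_iff_gcd_eq_1)
  then obtain p where "prime p" "p dvd gcd (q - 1) (cofactor q s)" using prime_factor_nat by blast
  hence p: "prime p" "p dvd q - 1" "p dvd cofactor q s" by simp_all
  have "int p dvd int (q - 1)" using p(2) by (simp only: int_dvd_int_iff)
  hence "[int q = 1] (mod int p)" using q by (simp add: cong_iff_dvd_diff of_nat_diff)
  moreover from cong_pow[OF this, of 2] have "[int q ^ 2 = 1] (mod int p)" by simp
  ultimately show False
    using p(3) prime_dvd_cofactor_iff[OF s p(1)] not_dvd_alt_geom_sum_if_cong_one[OF s] p(1)
    by (simp add: prime_nat_iff_prime)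
qed

lemma prime_dvd_cofactor:
  assumes s: "odd s" and p: "prime p"
    and dvd_m: "p dvd (q + 1) * (q ^ 2 + 1)" and dvd_t: "p dvd cofactor q s"
  shows "p dvd gcd (q + 1) s \<or> p dvd gcd (q ^ 2 + 1) s"
proof -
  let ?x = "int q" and ?p = "int p"
  have p': "prime ?p" using p by simp
  show ?thesis
  proof (cases "p dvd q + 1")
    case True
    have x: "[?x = - 1] (mod ?p)" using True by (simp only: int_cong_minus_one_iff)
    hence "[?x ^ 2 = 1] (mod ?p)" using cong_pow[OF x, of 2] by simp
    hence "?p dvd alt_geom_sum s ?x"
      using dvd_t prime_dvd_cofactor_iff[OF s p] not_dvd_alt_geom_sum_if_cong_one[OF s p'] by blast
    hence "p dvd s" using dvd_alt_geom_sum_iff_if_cong_minus_one[OF x] by simp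
    thus ?thesis using True by simp
  next
    case False
    have "p dvd q + 1 \<or> p dvd q ^ 2 + 1" using dvd_m p by (simp only: prime_dvd_mult_iff)
    hence dvd_q2: "p dvd q ^ 2 + 1" using False by blast
    hence x2: "[?x ^ 2 = - 1] (mod ?p)" using int_cong_minus_one_iff[of "q ^ 2" p] by simp
    have "?p dvd alt_geom_sum s (?x ^ 2)"
    proof (rule ccontr)
      assume "\<not> ?p dvd alt_geom_sum s (?x ^ 2)"
      hence "?p dvd alt_geom_sum s ?x" using dvd_t prime_dvd_cofactor_iff[OF s p] by blast
      hence "[?x = - 1] (mod ?p)" using cong_minus_one_if_dvd_alt_geom_sum[OF s p' x2] by blast
      thus False using False by (simp only: int_cong_minus_one_iff)
    qed
    hence "p dvd s" using dvd_alt_geom_sum_iff_if_cong_minus_one[OF x2] by simp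
    thus ?thesis using dvd_q2 by simp
  qed
qed

definition cyclic_sylow :: "('a, 'b) monoid_scheme \<Rightarrow> nat \<Rightarrow> bool" where
  "cyclic_sylow G p \<longleftrightarrow> (\<forall>P. sylow_subgroup G p P \<longrightarrow> cyclic_group (subgroup_generated G P))"

context group
begin

lemma pow_card_subgroup_eq_one:
  assumes "subgroup H G" "x \<in> H"
  shows "x [^] card H = \<one>"
proof -
  interpret H: group "G\<lparr>carrier := H\<rparr>" using subgroup_imp_group[OF assms(1)] .
  have "x [^]\<^bsub>G\<lparr>carrier := H\<rparr>\<^esub> order (G\<lparr>carrier := H\<rparr>) = \<one>"
    using H.pow_order_eq_1 assms(2) by simp
  thus ?thesis by (simp add: order_def flip: nat_pow_consistent)
qed

lemma mem_subgroup_if_coprime_pows: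
  fixes a b :: nat
  assumes H: "subgroup H G" and x: "x \<in> carrier G"
    and a: "x [^] a \<in> H" and b: "x [^] b \<in> H" and ab: "coprime a b"
  shows "x \<in> H"
proof -
  obtain u v where uv: "u * int a + v * int b = 1"
    using bezout_int[of "int a" "int b"] ab by (metis coprime_iff_gcd_eq_1 coprime_int_iff)
  have "x = x [^] (int a * u + int b * v)" using uv x by (simp add: mult.commute)
  also have "\<dots> = (x [^] a) [^] u \<otimes> (x [^] b) [^] v"
    using x by (simp add: int_pow_mult int_pow_pow int_pow_int flip: int_pow_int)
  finally show ?thesis
    using H a b by (metis subgroup.m_closed subgroup_int_pow_closed)
qed

lemma card_pow_eq_one_le_if_cyclic:
  assumes cyc: "cyclic_group G" and fin: "finite (carrier G)" and n: "n dvd order G"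
  shows "card {z \<in> carrier G. z [^] n = \<one>} \<le> n"
proof -
  let ?N = "order G"
  obtain g where g: "g \<in> carrier G" "subgroup_generated G {g} = G"
    using cyc unfolding cyclic_group_def by blast
  have og: "ord g = ?N" using cyclic_order_is_ord[OF g(1)] g(2) by simp
  have N: "0 < ?N" using fin by (simp add: order_gt_0_iff_finite)
  have "carrier G = generate G {g}"
    using g by (metis carrier_subgroup_generated inf.absorb2 empty_subsetI insert_subset)
  also have "\<dots> = (\<lambda>j. g [^] j) ` {..<?N}"
    using generate_pow_nat[OF g(1)] ord_elems[OF fin g(1)] og N by auto
  finally have gen: "carrier G = (\<lambda>j. g [^] j) ` {..<?N}" .
  obtain d where d: "?N = d * n" using n by (metis dvd_def mult.commute)
  have n0: "0 < n" using N d by (metis gr0I mult_0_right)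
  have "{z \<in> carrier G. z [^] n = \<one>} \<subseteq> (\<lambda>i. g [^] (d * i)) ` {..<n}"
  proof
    fix z assume "z \<in> {z \<in> carrier G. z [^] n = \<one>}"
    then obtain j where j: "j < ?N" "z = g [^] j" and "g [^] (j * n) = \<one>"
      using gen g(1) by (auto simp: nat_pow_pow)
    hence "ord g dvd j * n" using pow_eq_id[OF g(1)] by blast
    hence "d * n dvd j * n" by (simp only: og d)
    hence "d dvd j" using n0 by simp
    then obtain i where i: "j = d * i" by blast
    hence "i < n" using j(1) d by (metis mult.commute mult_less_cancel1)
    thus "z \<in> (\<lambda>i. g [^] (d * i)) ` {..<n}" using i j by blast
  qed
  hence "card {z \<in> carrier G. z [^] n = \<one>} \<le> card ((\<lambda>i. g [^] (d * i)) ` {..<n})"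
    by (simp add: card_mono)
  also have "\<dots> \<le> n" using card_image_le[of "{..<n}"] by simp
  finally show ?thesis .
qed

lemma card_pow_eq_one_le_if_cyclic_subgroup:
  assumes P: "subgroup P G" and cyc: "cyclic_group (subgroup_generated G P)"
    and fin: "finite P" and n: "n dvd card P"
  shows "card {z \<in> P. z [^] n = \<one>} \<le> n"
proof -
  interpret H: group "subgroup_generated G P" by (rule group_subgroup_generated)
  have carrier: "carrier (subgroup_generated G P) = P"
    using P by (simp add: subgroup.carrier_subgroup_generated_subgroup)
  show ?thesis
    using H.card_pow_eq_one_le_if_cyclic[OF cyc] fin n
    by (simp add: carrier order_def pow_subgroup_generated)
qed

lemma sylow_subgroup_of_subgroup:
  assumes fin: "finite (carrier G)" and M: "subgroup M G" and p: "prime p"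
  obtains Q where "subgroup Q G" "Q \<subseteq> M" "card Q = p ^ multiplicity p (card M)"
proof -
  interpret M: group "G\<lparr>carrier := M\<rparr>" using subgroup_imp_group[OF M] .
  have "finite M" using fin M by (meson finite_subset subgroup.subset)
  moreover have "order (G\<lparr>carrier := M\<rparr>) = p ^ multiplicity p (card M) * (card M div p ^ multiplicity p (card M))"
    by (simp add: order_def multiplicity_dvd)
  ultimately obtain Q where Q: "subgroup Q (G\<lparr>carrier := M\<rparr>)" "card Q = p ^ multiplicity p (card M)"
    using sylow_thm[OF p M.is_group] by auto
  have "Q \<subseteq> M" using subgroup.subset[OF Q(1)] by simp
  moreover have "subgroup Q G"
  proof (rule group_incl_imp_subgroup)
    show "Q \<subseteq> carrier G" using \<open>Q \<subseteq> M\<close> subgroup.subset[OF M] by blast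
    show "group (G\<lparr>carrier := Q\<rparr>)" using M.subgroup_imp_group[OF Q(1)] by simp
  qed
  ultimately show ?thesis using that Q(2) by blast
qed

end

context comm_group
begin

lemma pow_index_in_subgroup:
  assumes fin: "finite (carrier G)" and H: "subgroup H G"
    and ord: "order G = card H * t" and x: "x \<in> carrier G"
  shows "x [^] t \<in> H"
proof -
  interpret N: normal H G using subgroup_imp_normal[OF H] .
  interpret Q: group "G Mod H" by (rule N.factorgroup_is_group)
  have "0 < card H"
    using H fin by (metis card_gt_0_iff empty_iff finite_subset subgroup.one_closed subgroup.subset)
  hence "order (G Mod H) = t" using lagrange[OF H] ord by (simp add: order_def FactGroup_def)
  have "H #> (x [^] t) = (H #> x) [^]\<^bsub>G Mod H\<^esub> t"
    using hom_nat_pow[OF N.r_coset_hom_Mod x is_group Q.is_group] by simp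
  also have "\<dots> = H"
    using Q.pow_order_eq_1 N.r_coset_hom_Mod x \<open>order (G Mod H) = t\<close> by (auto simp: hom_def)
  finally show ?thesis using rcos_self[OF _ H, of "x [^] t"] x by simp
qed

lemma mem_subgroup_if_pow_coprime_index:
  assumes "finite (carrier G)" "subgroup H G" "order G = card H * t"
    and "x \<in> carrier G" "x [^] n = \<one>" "coprime n t"
  shows "x \<in> H"
  using assms pow_index_in_subgroup[OF assms(1-4)]
  by (metis mem_subgroup_if_coprime_pows subgroup.one_closed)

lemma mem_sylow_if_pow_prime_power:
  assumes fin: "finite (carrier G)" and p: "prime p" and P: "sylow_subgroup G p P"
    and x: "x \<in> carrier G" "x [^] (p ^ k) = \<one>"
  shows "x \<in> P"
proof -
  let ?e = "multiplicity p (order G)"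
  have "0 < order G" using fin by (simp add: order_gt_0_iff_finite)
  hence "\<not> p dvd order G div p ^ ?e"
    using multiplicity_decompose p by (metis not_prime_unit less_not_refl2)
  hence "coprime (p ^ k) (order G div p ^ ?e)" using p by (simp add: prime_imp_coprime)
  moreover have "order G = card P * (order G div p ^ ?e)"
    using P by (simp add: sylow_subgroup_def multiplicity_dvd)
  ultimately show ?thesis
    using mem_subgroup_if_pow_coprime_index fin P x by (auto simp: sylow_subgroup_def)
qed

lemma mem_subgroup_if_pow_sylow_exponent:
  assumes fin: "finite (carrier G)" and M: "subgroup M G" and ord: "order G = card M * t"
    and p: "prime p" and cyc: "p dvd card M \<Longrightarrow> p dvd t \<Longrightarrow> cyclic_sylow G p"
    and y: "y \<in> carrier G" "y [^] (p ^ multiplicity p (card M)) = \<one>"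
  shows "y \<in> M"
proof (cases "coprime (p ^ multiplicity p (card M)) t")
  case True
  thus ?thesis using mem_subgroup_if_pow_coprime_index[OF fin M ord y] by blast
next
  case False
  let ?a = "multiplicity p (card M)" and ?e = "multiplicity p (order G)"
  have "?a \<noteq> 0"
  proof
    assume "?a = 0"
    hence "coprime (p ^ ?a) t" by simp
    thus False using False by blast
  qed
  hence "p dvd p ^ ?a" by simp
  hence "p dvd card M" using multiplicity_dvd by (rule dvd_trans)
  moreover have "p dvd t"
  proof (rule ccontr)
    assume "\<not> p dvd t"
    hence "coprime (p ^ ?a) t" using p by (simp add: prime_imp_coprime)
    thus False using False by blast
  qed
  ultimately have cyc: "cyclic_sylow G p" using cyc by blast
  obtain P where P: "subgroup P G" "card P = p ^ ?e"
    using sylow_thm[OF p is_group _ fin] by (metis multiplicity_dvd dvd_mult_div_cancel)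
  hence "sylow_subgroup G p P" by (simp add: sylow_subgroup_def)
  hence cyc_P: "cyclic_group (subgroup_generated G P)" using cyc by (simp add: cyclic_sylow_def)
  obtain Q where Q: "subgroup Q G" "Q \<subseteq> M" "card Q = p ^ ?a"
    using sylow_subgroup_of_subgroup[OF fin M p] by blast
  have "p ^ ?a dvd order G" using ord multiplicity_dvd by (metis dvd_mult2)
  moreover have "order G \<noteq> 0" using fin by (simp add: order_gt_0_iff_finite)
  ultimately have "?a \<le> ?e" using p multiplicity_geI[of "order G" p] not_prime_unit by blast
  hence a_dvd: "p ^ ?a dvd card P" using P(2) by (simp add: le_imp_power_dvd)
  define T where "T = {z \<in> P. z [^] (p ^ ?a) = \<one>}"
  have fin_P: "finite P" using fin P(1) by (meson finite_subset subgroup.subset)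
  have card_T: "card T \<le> p ^ ?a"
    unfolding T_def by (rule card_pow_eq_one_le_if_cyclic_subgroup[OF P(1) cyc_P fin_P a_dvd])
  have in_T: "z \<in> T" if "z \<in> carrier G" "z [^] (p ^ ?a) = \<one>" for z
    using mem_sylow_if_pow_prime_power[OF fin p \<open>sylow_subgroup G p P\<close> that] that
    unfolding T_def by blast
  have QT: "Q \<subseteq> T"
  proof
    fix z assume z: "z \<in> Q"
    show "z \<in> T"
      using z Q(1) subgroup.subset pow_card_subgroup_eq_one[OF Q(1) z] Q(3) by (intro in_T) auto
  qed
  have "finite T" using fin_P by (simp add: T_def)
  hence "Q = T" using card_seteq[OF _ QT] card_T Q(3) by simp
  thus ?thesis using in_T[OF y] Q(2) by blast
qed

lemma mem_subgroup_if_pow_dvd_card: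
  assumes fin: "finite (carrier G)" and M: "subgroup M G" and ord: "order G = card M * t"
    and cyc: "\<And>p. prime p \<Longrightarrow> p dvd card M \<Longrightarrow> p dvd t \<Longrightarrow> cyclic_sylow G p"
  shows "n dvd card M \<Longrightarrow> y \<in> carrier G \<Longrightarrow> y [^] n = \<one> \<Longrightarrow> y \<in> M"
proof (induction n arbitrary: y rule: less_induct)
  case (less n)
  show ?case
  proof (cases "n = 1")
    case True
    thus ?thesis using less.prems M subgroup.one_closed by fastforce
  next
    case False
    have "0 < card M"
      using M fin by (metis card_gt_0_iff empty_iff finite_subset subgroup.one_closed subgroup.subset)
    hence "n \<noteq> 0" using less.prems(1) by auto
    obtain p where p: "prime p" "p dvd n" using False prime_factor_nat by blast
    have p_not_unit: "\<not> is_unit p" using p(1) not_prime_unit by blast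
    let ?k = "multiplicity p n"
    obtain n' where n': "n = p ^ ?k * n'" "\<not> p dvd n'"
      using multiplicity_decompose'[OF \<open>n \<noteq> 0\<close> p_not_unit] by blast
    have "?k \<noteq> 0"
    proof
      assume "?k = 0"
      thus False using n' p(2) by simp
    qed
    hence "1 < p ^ ?k" using prime_gt_1_nat[OF p(1)] by (intro one_less_power) auto
    moreover have "n' \<noteq> 0" using n'(1) \<open>n \<noteq> 0\<close> by (metis mult_0_right)
    ultimately have "n' < p ^ ?k * n'" by simp
    hence "n' < n" using n'(1) by linarith
    have y: "y \<in> carrier G" by (rule less.prems(2))
    have "y [^] (p ^ ?k) \<in> M"
    proof (rule less.IH[OF \<open>n' < n\<close>])
      show "n' dvd card M" using n'(1) less.prems(1) by (metis dvd_mult_right dvd_trans)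
      show "(y [^] (p ^ ?k)) [^] n' = \<one>" using y n'(1) less.prems(3) by (simp add: nat_pow_pow)
    qed (use y in simp)
    moreover have "y [^] n' \<in> M"
    proof (rule mem_subgroup_if_pow_sylow_exponent[OF fin M ord p(1)])
      show "cyclic_sylow G p" if "p dvd card M" "p dvd t" using cyc p(1) that .
      have "p ^ ?k dvd card M" using n'(1) less.prems(1) by (metis dvd_mult_left dvd_trans)
      hence "?k \<le> multiplicity p (card M)"
        using multiplicity_geI[of "card M" p] \<open>0 < card M\<close> p_not_unit by simp
      hence "p ^ ?k * n' dvd p ^ multiplicity p (card M) * n'"
        by (intro mult_dvd_mono le_imp_power_dvd) auto
      moreover have "ord y dvd p ^ ?k * n'"
        using less.prems(3) pow_eq_id[OF y] n'(1) by simp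
      ultimately have "ord y dvd n' * p ^ multiplicity p (card M)"
        by (metis dvd_trans mult.commute)
      thus "(y [^] n') [^] (p ^ multiplicity p (card M)) = \<one>"
        using y by (simp add: nat_pow_pow pow_eq_id)
    qed (use y in simp)
    moreover have "coprime (p ^ ?k) n'" using n'(2) p(1) by (simp add: prime_imp_coprime)
    ultimately show ?thesis using mem_subgroup_if_coprime_pows[OF M y] by blast
  qed
qed

end

lemma (in group) pow_fixed_eq:
  assumes "1 \<le> q"
  shows "pow_fixed G q = {x \<in> carrier G. ord x dvd (q - 1) * ((q + 1) * (q ^ 2 + 1))}"
proof -
  have "q ^ 4 = Suc ((q - 1) * ((q + 1) * (q ^ 2 + 1)))"
    using assms by (cases q) (simp_all add: algebra_simps power2_eq_square power4_eq_xxxx)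
  thus ?thesis by (auto simp: pow_fixed_def pow_eq_id)
qed

theorem lemma4p1:
  fixes G :: "('a, 'b) monoid_scheme" and q s :: nat and M :: "'a set"
  assumes "prime_power q"
    and "odd s"
    and "comm_group G"
    and "finite (carrier G)"
    and "order G = (q ^ s + 1) * (q ^ (2 * s) + 1)"
    and "\<exists>D. difference_set G D
            ((q ^ (4 * s) - 1) div (q ^ s - 1))
            ((q ^ (3 * s) - 1) div (q ^ s - 1))
            ((q ^ (2 * s) - 1) div (q ^ s - 1))"
    and "subgroup M G"
    and "card M = (q + 1) * (q ^ 2 + 1)"
  shows "M \<subseteq> pow_fixed G q
    \<and> ((\<forall>r. Factorial_Ring.prime (r::nat) \<and> (r dvd gcd (q + 1) s \<or> r dvd gcd (q ^ 2 + 1) s) \<longrightarrow>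
            (\<forall>P. sylow_subgroup G r P \<longrightarrow> cyclic_group (subgroup_generated G P)))
         \<longrightarrow> M = pow_fixed G q)"
proof -
  interpret comm_group G by (rule assms(3))
  note s = assms(2) and fin = assms(4) and M = assms(7)
  have "1 \<le> q" using assms(1) by (auto simp: prime_power_def Suc_le_eq prime_gt_0_nat)
  define t where "t = cofactor q s"
  have ord: "order G = card M * t"
    using assms(5,8) mult_cofactor[OF s] by (simp add: t_def)
  have coprime: "coprime (q - 1) t" using coprime_cofactor[OF s \<open>1 \<le> q\<close>] by (simp add: t_def)
  have fixed: "pow_fixed G q = {x \<in> carrier G. ord x dvd (q - 1) * card M}"
    using pow_fixed_eq[OF \<open>1 \<le> q\<close>] assms(8) by simp
  have "M \<subseteq> pow_fixed G q"
  proof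
    fix x assume "x \<in> M"
    hence x: "x \<in> carrier G" using subgroup.subset[OF M] by blast
    have "ord x dvd card M"
      using pow_card_subgroup_eq_one[OF M \<open>x \<in> M\<close>] pow_eq_id[OF x] by simp
    thus "x \<in> pow_fixed G q" using x by (simp add: fixed dvd_mult)
  qed
  moreover have "pow_fixed G q \<subseteq> M"
    if cyc: "\<forall>r. prime r \<and> (r dvd gcd (q + 1) s \<or> r dvd gcd (q ^ 2 + 1) s) \<longrightarrow>
            (\<forall>P. sylow_subgroup G r P \<longrightarrow> cyclic_group (subgroup_generated G P))"
  proof
    fix x assume "x \<in> pow_fixed G q"
    hence x: "x \<in> carrier G" "ord x dvd card M * (q - 1)" by (auto simp: fixed mult.commute)
    have "ord x dvd card M * t" using ord_dvd_group_order[OF x(1)] ord by simp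
    hence "ord x dvd card M" by (rule dvd_if_dvd_mult_coprime[OF x(2) _ coprime])
    hence pow: "x [^]\<^bsub>G\<^esub> card M = \<one>\<^bsub>G\<^esub>" using pow_eq_id[OF x(1)] by simp
    have "cyclic_sylow G p" if p: "prime p" "p dvd card M" "p dvd t" for p
    proof -
      have "p dvd gcd (q + 1) s \<or> p dvd gcd (q ^ 2 + 1) s"
        using prime_dvd_cofactor[OF s p(1)] p(2,3) assms(8) by (simp add: t_def)
      thus ?thesis using cyc p(1) unfolding cyclic_sylow_def by blast
    qed
    thus "x \<in> M" using mem_subgroup_if_pow_dvd_card[OF fin M ord _ dvd_refl x(1) pow] by blast
  qed
  ultimately show ?thesis by blast
qed

end
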